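(* Let $P$ be a distribution on $\mathcal{X}$, $R>0$, $K>0$. Then \[ \lim_{\epsilon\searrow 0^{+}} E_e(P,R,K,\epsilon)=E_e(P,R,K,0), \] where for $\epsilon\in\mathbb{R}$, $E_e(P,R,K,\epsilon)=\min\{E_1(P,R,K,\epsilon),E_2(P,R,K,\epsilon)\}$ with \[ E_1(P,R,K,\epsilon)=\min_{TV\widetilde{V}:\; B_{T\widetilde{V}}\le B_{TV}+\epsilon\le K} F(TV,T\widetilde{V}),\qquad E_2(P,R,K,\epsilon)=\min_{TV\widetilde{V}:\; B_{TV}+\epsilon\ge K} F(TV,T\widetilde{V}), \] \[ F(TV,T\widetilde{V})=D(TV\|PW)+\big|A_{T\widetilde{V}}-R+|B_{T\widetilde{V}}-K|^{+}\big|^{+}. \]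
   Context: $\mathcal{X},\mathcal{Y}$ are finite alphabets and $W(y|x)$ is a conditional distribution of $y\in\mathcal{Y}$ given $x\in\mathcal{X}$. Logs are natural. $TV$, $T\widetilde{V}$ denote joint distributions on $\mathcal{Y}\times\mathcal{X}$ with common $\mathcal{Y}$-marginal $T$ and conditionals $V(x|y)$, $\widetilde{V}(x|y)$; minima are over all such triples (the minimum over an empty set is $+\infty$). $PW$ is the joint distribution $P(x)W(y|x)$; $D(TV\|PW)=\sum T(y)V(x|y)\log\frac{T(y)V(x|y)}{P(x)W(y|x)}$; $A_{TV}=\sum T(y)V(x|y)\log\frac{V(x|y)}{P(x)}$; $B_{TV}=\mathbb{E}_{TV}[-\log W(Y|X)]$; $|t|^{+}=\max\{0,t\}$. *)

theory Defs
  imports "HOL-Analysis.Analysis"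
begin

definition is_dist :: "('a::finite \<Rightarrow> real) \<Rightarrow> bool" where
  "is_dist p \<longleftrightarrow> (\<forall>a. 0 \<le> p a) \<and> (\<Sum>a\<in>UNIV. p a) = 1"

text \<open>Conditional distributions: for every b, V b is a distribution (V b a = V(a|b)).\<close>
definition is_cond :: "('b \<Rightarrow> 'a::finite \<Rightarrow> real) \<Rightarrow> bool" where
  "is_cond V \<longleftrightarrow> (\<forall>b. is_dist (V b))"

text \<open>Joint TV(y,x) = T y * V y x, channel W x y = W(y|x), P x = P(x).
  Conventions: 0 log(0/.) = 0, q log(q/0) = +infinity for q > 0.\<close>

definition Dterm :: "('y::finite \<Rightarrow> real) \<Rightarrow> ('y \<Rightarrow> 'x::finite \<Rightarrow> real)
    \<Rightarrow> ('x \<Rightarrow> real) \<Rightarrow> ('x \<Rightarrow> 'y \<Rightarrow> real) \<Rightarrow> ereal" where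
  "Dterm T V P W = (\<Sum>y\<in>UNIV. \<Sum>x\<in>UNIV.
     (let q = T y * V y x; p = P x * W x y in
      if q = 0 then 0 else if p = 0 then \<infinity> else ereal (q * ln (q / p))))"

definition Aterm :: "('y::finite \<Rightarrow> real) \<Rightarrow> ('y \<Rightarrow> 'x::finite \<Rightarrow> real)
    \<Rightarrow> ('x \<Rightarrow> real) \<Rightarrow> ereal" where
  "Aterm T V P = (\<Sum>y\<in>UNIV. \<Sum>x\<in>UNIV.
     (let q = T y * V y x in
      if q = 0 then 0 else if P x = 0 then \<infinity> else ereal (q * ln (V y x / P x))))"

definition Bterm :: "('y::finite \<Rightarrow> real) \<Rightarrow> ('y \<Rightarrow> 'x::finite \<Rightarrow> real)
    \<Rightarrow> ('x \<Rightarrow> 'y \<Rightarrow> real) \<Rightarrow> ereal" where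
  "Bterm T V W = (\<Sum>y\<in>UNIV. \<Sum>x\<in>UNIV.
     (let q = T y * V y x in
      if q = 0 then 0 else if W x y = 0 then \<infinity> else ereal (q * (- ln (W x y)))))"

definition pospart :: "ereal \<Rightarrow> ereal" where
  "pospart t = max 0 t"

definition Ffun :: "('x \<Rightarrow> real) \<Rightarrow> ('x::finite \<Rightarrow> 'y::finite \<Rightarrow> real) \<Rightarrow> real \<Rightarrow> real
    \<Rightarrow> ('y \<Rightarrow> real) \<Rightarrow> ('y \<Rightarrow> 'x \<Rightarrow> real) \<Rightarrow> ('y \<Rightarrow> 'x \<Rightarrow> real) \<Rightarrow> ereal" where
  "Ffun P W R K T V V' = Dterm T V P W
      + pospart (Aterm T V' P - ereal R + pospart (Bterm T V' W - ereal K))"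

definition E1 :: "('x::finite \<Rightarrow> real) \<Rightarrow> ('x \<Rightarrow> 'y::finite \<Rightarrow> real) \<Rightarrow> real \<Rightarrow> real \<Rightarrow> real \<Rightarrow> ereal" where
  "E1 P W R K \<epsilon> = (INF tvv \<in> {(T, V, V'). is_dist T \<and> is_cond V \<and> is_cond V'
        \<and> Bterm T V' W \<le> Bterm T V W + ereal \<epsilon> \<and> Bterm T V W + ereal \<epsilon> \<le> ereal K}.
      (case tvv of (T, V, V') \<Rightarrow> Ffun P W R K T V V'))"

definition E2 :: "('x::finite \<Rightarrow> real) \<Rightarrow> ('x \<Rightarrow> 'y::finite \<Rightarrow> real) \<Rightarrow> real \<Rightarrow> real \<Rightarrow> real \<Rightarrow> ereal" where
  "E2 P W R K \<epsilon> = (INF tvv \<in> {(T, V, V'). is_dist T \<and> is_cond V \<and> is_cond V'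
        \<and> Bterm T V W + ereal \<epsilon> \<ge> ereal K}.
      (case tvv of (T, V, V') \<Rightarrow> Ffun P W R K T V V'))"

definition Ee :: "('x::finite \<Rightarrow> real) \<Rightarrow> ('x \<Rightarrow> 'y::finite \<Rightarrow> real) \<Rightarrow> real \<Rightarrow> real \<Rightarrow> real \<Rightarrow> ereal" where
  "Ee P W R K \<epsilon> = min (E1 P W R K \<epsilon>) (E2 P W R K \<epsilon>)"

end

theory Submission
  imports Defs "HOL-Real_Asymp.Real_Asymp"
begin

text \<open>Enlarging \<open>\<epsilon>\<close> enlarges the union of the constraint sets of \<open>E1\<close> and \<open>E2\<close>, over which
  \<open>Ee\<close> is a single infimum; so \<open>Ee\<close> is non-increasing in \<open>\<epsilon>\<close> and its right limit at 0 is at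
  most its value at 0. Conversely, take triples \<open>(T, V, V')\<close> feasible for \<open>\<epsilon>\<^sub>n \<rightarrow> 0\<close> whose
  objective stays below a finite bound \<open>c\<close>. They lie in a product of simplices, so a
  subsequence converges. A finite objective forces the support conditions under which the
  terms \<open>D\<close>, \<open>A\<close>, \<open>B\<close> are finite sums of continuous functions (\<open>x ln x\<close> is continuous at 0),
  and these conditions pass to the limit. Hence the objective converges along the
  subsequence, the closed constraints hold for the limit at \<open>\<epsilon> = 0\<close>, and \<open>Ee\<close> at 0 is at
  most \<open>c\<close>.\<close>

lemma tendsto_at_right_zero_antimono:
  fixes f :: "real \<Rightarrow> 'a::{linorder_topology, dense_linorder}"
  assumes antimono: "\<And>x y. 0 \<le> x \<Longrightarrow> x \<le> y \<Longrightarrow> f y \<le> f x"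
    and lsc: "\<And>c. (\<And>n. f (inverse (Suc n)) < c) \<Longrightarrow> f 0 \<le> c"
  shows "(f \<longlongrightarrow> f 0) (at_right 0)"
proof (rule order_tendstoI)
  fix a
  assume "f 0 < a"
  show "eventually (\<lambda>x. f x < a) (at_right 0)"
    using eventually_at_right_less[of 0]
  proof eventually_elim
    case (elim x)
    then have "f x \<le> f 0"
      by (intro antimono) auto
    then show ?case
      using \<open>f 0 < a\<close> by (rule le_less_trans)
  qed
next
  fix a
  assume "a < f 0"
  then obtain b where "a < b" "b < f 0"
    using dense by blast
  then obtain n where "b \<le> f (inverse (Suc n))"
    using lsc[of b] by (meson not_le)
  show "eventually (\<lambda>x. a < f x) (at_right 0)"
    unfolding eventually_at_right_field
  proof (intro exI conjI allI impI)
    fix y :: real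
    assume "0 < y" "y < inverse (Suc n)"
    then have "f (inverse (Suc n)) \<le> f y"
      by (intro antimono) auto
    with \<open>a < b\<close> \<open>b \<le> f (inverse (Suc n))\<close> show "a < f y"
      by (meson less_le_trans order_trans)
  qed simp
qed

lemma continuous_on_xlnx: "continuous_on {0..} (\<lambda>x::real. x * ln x)"
  unfolding continuous_on_eq_continuous_within
proof
  fix x :: real
  assume "x \<in> {0..}"
  then consider "x = 0" | "x > 0"
    by fastforce
  then show "continuous (at x within {0..}) (\<lambda>x. x * ln x)"
  proof cases
    case 1
    have "((\<lambda>x::real. x * ln x) \<longlongrightarrow> 0) (at_right 0)"
      by real_asymp
    with 1 show ?thesis
      by (simp add: continuous_within at_within_Ici_at_right)
  next
    case 2
    then have "isCont (\<lambda>x. x * ln x) x"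
      by (intro continuous_intros) auto
    then show ?thesis
      by (rule continuous_at_imp_continuous_at_within)
  qed
qed

lemma tendsto_mult_ln_div:
  fixes q :: "nat \<Rightarrow> real"
  assumes q: "q \<longlonglongrightarrow> q0" and nonneg: "\<And>n. 0 \<le> q n" and "0 \<le> p"
  shows "(\<lambda>n. q n * ln (q n / p)) \<longlonglongrightarrow> q0 * ln (q0 / p)"
proof (cases "p = 0")
  case False
  have "0 \<le> q0"
    using q by (rule LIMSEQ_le_const) (use nonneg in blast)
  have split_ln: "z * ln (z / p) = z * ln z - z * ln p" if "0 \<le> z" for z
    using that False \<open>0 \<le> p\<close> by (cases "z = 0") (auto simp: ln_div algebra_simps)
  have "(\<lambda>n. q n * ln (q n)) \<longlonglongrightarrow> q0 * ln q0"
    using continuous_on_tendsto_compose[OF continuous_on_xlnx q] nonneg \<open>0 \<le> q0\<close> by simp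
  then have "(\<lambda>n. q n * ln (q n) - q n * ln p) \<longlonglongrightarrow> q0 * ln q0 - q0 * ln p"
    by (intro tendsto_diff tendsto_mult_right q)
  then show ?thesis
    using split_ln[OF \<open>0 \<le> q0\<close>] split_ln[OF nonneg] by simp
qed simp \<comment> \<open>for \<open>p = 0\<close> both sides vanish, since \<open>z / 0 = 0\<close> and \<open>ln 0 = 0\<close>\<close>

lemma fun_bounded_imp_convergent_subsequence:
  fixes f :: "nat \<Rightarrow> 'a::finite \<Rightarrow> real"
  assumes "\<And>n a. \<bar>f n a\<bar> \<le> B"
  obtains r l where "strict_mono r" "\<And>a. (\<lambda>n. f (r n) a) \<longlonglongrightarrow> l a"
proof -
  define g where "g n = (\<chi> a. f n a)" for n
  have "norm (g n) \<le> CARD('a) * B" for n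
    using norm_le_l1_cart[of "g n"] sum_bounded_above[of UNIV "\<lambda>a. \<bar>g n $ a\<bar>" B] assms
    by (simp add: g_def)
  then have "bounded (range g)"
    unfolding bounded_iff by blast
  then obtain l r where "strict_mono r" "(g \<circ> r) \<longlonglongrightarrow> l"
    using bounded_imp_convergent_subsequence by blast
  then show thesis
    by (intro that[of r "\<lambda>a. l $ a"]) (auto dest: tendsto_vec_nth simp: g_def o_def)
qed

lemma is_dist_nonneg: "is_dist p \<Longrightarrow> 0 \<le> p a"
  unfolding is_dist_def by simp

lemma is_dist_abs_le_one: "is_dist p \<Longrightarrow> \<bar>p a\<bar> \<le> 1"
  unfolding is_dist_def using member_le_sum[of a UNIV p] by auto

lemma is_dist_limit:
  assumes "\<And>n. is_dist (p n)" "\<And>a. (\<lambda>n. p n a) \<longlonglongrightarrow> p0 a"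
  shows "is_dist p0"
proof -
  have "0 \<le> p0 a" for a
    using assms(2) by (rule LIMSEQ_le_const) (use assms(1) is_dist_nonneg in blast)
  moreover have "(\<lambda>n. \<Sum>a\<in>UNIV. p n a) \<longlonglongrightarrow> (\<Sum>a\<in>UNIV. p0 a)"
    by (intro tendsto_sum assms(2))
  then have "(\<Sum>a\<in>UNIV. p0 a) = 1"
    using assms(1) by (simp add: is_dist_def LIMSEQ_const_iff)
  ultimately show ?thesis
    unfolding is_dist_def by simp
qed

lemma convergent_subsequence_dist_cond_cond:
  fixes T :: "nat \<Rightarrow> 'y::finite \<Rightarrow> real" and V V' :: "nat \<Rightarrow> 'y \<Rightarrow> 'x::finite \<Rightarrow> real"
  assumes "\<And>n. is_dist (T n)" "\<And>n. is_cond (V n)" "\<And>n. is_cond (V' n)"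
  obtains r T0 V0 V0' where "strict_mono r" "is_dist T0" "is_cond V0" "is_cond V0'"
    "\<And>y. (\<lambda>n. T (r n) y) \<longlonglongrightarrow> T0 y" "\<And>y x. (\<lambda>n. V (r n) y x) \<longlonglongrightarrow> V0 y x"
    "\<And>y x. (\<lambda>n. V' (r n) y x) \<longlonglongrightarrow> V0' y x"
proof -
  define f :: "nat \<Rightarrow> 'y + ('y \<times> 'x) + ('y \<times> 'x) \<Rightarrow> real" where
    "f n = case_sum (T n) (case_sum (case_prod (V n)) (case_prod (V' n)))" for n
  have "\<bar>f n z\<bar> \<le> 1" for n z
    using assms is_dist_abs_le_one[of "T n"] is_dist_abs_le_one[of "V n _"] is_dist_abs_le_one[of "V' n _"]
    unfolding f_def is_cond_def by (auto split: sum.split)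
  then obtain r l where r: "strict_mono r" and l: "\<And>z. (\<lambda>n. f (r n) z) \<longlonglongrightarrow> l z"
    using fun_bounded_imp_convergent_subsequence by blast
  have T: "(\<lambda>n. T (r n) y) \<longlonglongrightarrow> l (Inl y)" for y
    using l[of "Inl y"] by (simp add: f_def)
  have V: "(\<lambda>n. V (r n) y x) \<longlonglongrightarrow> l (Inr (Inl (y, x)))" for y x
    using l[of "Inr (Inl (y, x))"] by (simp add: f_def)
  have V': "(\<lambda>n. V' (r n) y x) \<longlonglongrightarrow> l (Inr (Inr (y, x)))" for y x
    using l[of "Inr (Inr (y, x))"] by (simp add: f_def)
  show thesis
  proof (rule that[OF r _ _ _ T V V'])
    show "is_dist (\<lambda>y. l (Inl y))"
      using assms(1) T by (rule is_dist_limit)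
    show "is_cond (\<lambda>y x. l (Inr (Inl (y, x))))"
      unfolding is_cond_def by (intro allI is_dist_limit[OF _ V]) (use assms(2) in \<open>simp add: is_cond_def\<close>)
    show "is_cond (\<lambda>y x. l (Inr (Inr (y, x))))"
      unfolding is_cond_def by (intro allI is_dist_limit[OF _ V']) (use assms(3) in \<open>simp add: is_cond_def\<close>)
  qed
qed

lemma Dterm_finite_iff:
  "Dterm T V P W \<noteq> \<infinity> \<longleftrightarrow> (\<forall>y x. T y * V y x \<noteq> 0 \<longrightarrow> P x * W x y \<noteq> 0)"
  by (auto simp: Dterm_def sum_Pinfty Let_def split: if_splits)

lemma Aterm_finite_iff:
  "Aterm T V P \<noteq> \<infinity> \<longleftrightarrow> (\<forall>y x. T y * V y x \<noteq> 0 \<longrightarrow> P x \<noteq> 0)"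
  by (auto simp: Aterm_def sum_Pinfty Let_def split: if_splits)

lemma Bterm_finite_iff:
  "Bterm T V W \<noteq> \<infinity> \<longleftrightarrow> (\<forall>y x. T y * V y x \<noteq> 0 \<longrightarrow> W x y \<noteq> 0)"
  by (auto simp: Bterm_def sum_Pinfty Let_def split: if_splits)

lemma Dterm_eq_sum:
  assumes "\<forall>y x. T y * V y x \<noteq> 0 \<longrightarrow> P x * W x y \<noteq> 0"
  shows "Dterm T V P W = ereal (\<Sum>y\<in>UNIV. \<Sum>x\<in>UNIV. T y * V y x * ln (T y * V y x / (P x * W x y)))"
  unfolding Dterm_def sum_ereal[symmetric] using assms by (intro sum.cong) (auto simp: Let_def)

lemma Aterm_eq_sum:
  assumes "\<forall>y x. T y * V y x \<noteq> 0 \<longrightarrow> P x \<noteq> 0"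
  shows "Aterm T V P = ereal (\<Sum>y\<in>UNIV. \<Sum>x\<in>UNIV. T y * V y x * ln (V y x / P x))"
  unfolding Aterm_def sum_ereal[symmetric] using assms by (intro sum.cong) (auto simp: Let_def)

lemma Bterm_eq_sum:
  assumes "\<forall>y x. T y * V y x \<noteq> 0 \<longrightarrow> W x y \<noteq> 0"
  shows "Bterm T V W = ereal (\<Sum>y\<in>UNIV. \<Sum>x\<in>UNIV. T y * V y x * - ln (W x y))"
  unfolding Bterm_def sum_ereal[symmetric] using assms by (intro sum.cong) (auto simp: Let_def)

lemma Dterm_finite_imp_Bterm_finite: "Dterm T V P W \<noteq> \<infinity> \<Longrightarrow> Bterm T V W \<noteq> \<infinity>"
  by (auto simp: Dterm_finite_iff Bterm_finite_iff)

lemma Ffun_finite: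
  assumes "Ffun P W R K T V V' \<noteq> \<infinity>"
  shows "Dterm T V P W \<noteq> \<infinity>" "Aterm T V' P \<noteq> \<infinity>" "Bterm T V' W \<noteq> \<infinity>"
  using assms by (auto simp: Ffun_def pospart_def)

lemma tendsto_Dterm:
  assumes T: "\<And>y. (\<lambda>n. T n y) \<longlonglongrightarrow> T0 y" and V: "\<And>y x. (\<lambda>n. V n y x) \<longlonglongrightarrow> V0 y x"
    and nonneg: "\<And>n y x. 0 \<le> T n y * V n y x" "\<And>x y. 0 \<le> P x * W x y"
    and finite: "\<And>n. Dterm (T n) (V n) P W \<noteq> \<infinity>"
  shows "\<bar>Dterm T0 V0 P W\<bar> \<noteq> \<infinity>" "(\<lambda>n. Dterm (T n) (V n) P W) \<longlonglongrightarrow> Dterm T0 V0 P W"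
proof -
  have q: "(\<lambda>n. T n y * V n y x) \<longlonglongrightarrow> T0 y * V0 y x" for y x
    by (intro tendsto_mult T V)
  have supp: "\<forall>y x. T n y * V n y x \<noteq> 0 \<longrightarrow> P x * W x y \<noteq> 0" for n
    using finite Dterm_finite_iff by blast
  have "(\<lambda>n. T n y * V n y x) = (\<lambda>n. 0)" if "P x * W x y = 0" for y x
    using supp that by (intro ext) meson
  then have supp0: "\<forall>y x. T0 y * V0 y x \<noteq> 0 \<longrightarrow> P x * W x y \<noteq> 0"
    using q by (metis LIMSEQ_const_iff)
  show "\<bar>Dterm T0 V0 P W\<bar> \<noteq> \<infinity>"
    using Dterm_eq_sum[OF supp0] by simp
  show "(\<lambda>n. Dterm (T n) (V n) P W) \<longlonglongrightarrow> Dterm T0 V0 P W"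
    unfolding Dterm_eq_sum[OF supp] Dterm_eq_sum[OF supp0] lim_ereal
    by (intro tendsto_sum tendsto_mult_ln_div q nonneg)
qed

lemma tendsto_Aterm:
  assumes T: "\<And>y. (\<lambda>n. T n y) \<longlonglongrightarrow> T0 y" and V: "\<And>y x. (\<lambda>n. V n y x) \<longlonglongrightarrow> V0 y x"
    and nonneg: "\<And>n y x. 0 \<le> V n y x" "\<And>x. 0 \<le> P x"
    and finite: "\<And>n. Aterm (T n) (V n) P \<noteq> \<infinity>"
  shows "\<bar>Aterm T0 V0 P\<bar> \<noteq> \<infinity>" "(\<lambda>n. Aterm (T n) (V n) P) \<longlonglongrightarrow> Aterm T0 V0 P"
proof -
  have q: "(\<lambda>n. T n y * V n y x) \<longlonglongrightarrow> T0 y * V0 y x" for y x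
    by (intro tendsto_mult T V)
  have supp: "\<forall>y x. T n y * V n y x \<noteq> 0 \<longrightarrow> P x \<noteq> 0" for n
    using finite Aterm_finite_iff by blast
  have "(\<lambda>n. T n y * V n y x) = (\<lambda>n. 0)" if "P x = 0" for y x
    using supp that by (intro ext) meson
  then have supp0: "\<forall>y x. T0 y * V0 y x \<noteq> 0 \<longrightarrow> P x \<noteq> 0"
    using q by (metis LIMSEQ_const_iff)
  show "\<bar>Aterm T0 V0 P\<bar> \<noteq> \<infinity>"
    using Aterm_eq_sum[OF supp0] by simp
  show "(\<lambda>n. Aterm (T n) (V n) P) \<longlonglongrightarrow> Aterm T0 V0 P"
    unfolding Aterm_eq_sum[OF supp] Aterm_eq_sum[OF supp0] lim_ereal mult.assoc
    by (intro tendsto_sum tendsto_mult T tendsto_mult_ln_div V nonneg)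
qed

lemma tendsto_Bterm:
  assumes T: "\<And>y. (\<lambda>n. T n y) \<longlonglongrightarrow> T0 y" and V: "\<And>y x. (\<lambda>n. V n y x) \<longlonglongrightarrow> V0 y x"
    and finite: "\<And>n. Bterm (T n) (V n) W \<noteq> \<infinity>"
  shows "\<bar>Bterm T0 V0 W\<bar> \<noteq> \<infinity>" "(\<lambda>n. Bterm (T n) (V n) W) \<longlonglongrightarrow> Bterm T0 V0 W"
proof -
  have q: "(\<lambda>n. T n y * V n y x) \<longlonglongrightarrow> T0 y * V0 y x" for y x
    by (intro tendsto_mult T V)
  have supp: "\<forall>y x. T n y * V n y x \<noteq> 0 \<longrightarrow> W x y \<noteq> 0" for n
    using finite Bterm_finite_iff by blast
  have "(\<lambda>n. T n y * V n y x) = (\<lambda>n. 0)" if "W x y = 0" for y x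
    using supp that by (intro ext) meson
  then have supp0: "\<forall>y x. T0 y * V0 y x \<noteq> 0 \<longrightarrow> W x y \<noteq> 0"
    using q by (metis LIMSEQ_const_iff)
  show "\<bar>Bterm T0 V0 W\<bar> \<noteq> \<infinity>"
    using Bterm_eq_sum[OF supp0] by simp
  show "(\<lambda>n. Bterm (T n) (V n) W) \<longlonglongrightarrow> Bterm T0 V0 W"
    unfolding Bterm_eq_sum[OF supp] Bterm_eq_sum[OF supp0] lim_ereal
    by (intro tendsto_sum tendsto_mult_right q)
qed

lemma tendsto_Ffun:
  assumes "(\<lambda>n. Dterm (T n) (V n) P W) \<longlonglongrightarrow> Dterm T0 V0 P W"
    and "(\<lambda>n. Aterm (T n) (V' n) P) \<longlonglongrightarrow> Aterm T0 V0' P"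
    and "(\<lambda>n. Bterm (T n) (V' n) W) \<longlonglongrightarrow> Bterm T0 V0' W"
    and "Dterm T0 V0 P W \<noteq> -\<infinity>" "Aterm T0 V0' P \<noteq> -\<infinity>"
  shows "(\<lambda>n. Ffun P W R K (T n) (V n) (V' n)) \<longlonglongrightarrow> Ffun P W R K T0 V0 V0'"
proof -
  have "Aterm T0 V0' P - ereal R \<noteq> -\<infinity>"
    using assms(5) by (cases "Aterm T0 V0' P") auto
  then show ?thesis
    unfolding Ffun_def pospart_def by (intro tendsto_intros assms) (use assms(4) in auto)
qed

definition feasible :: "('x::finite \<Rightarrow> 'y::finite \<Rightarrow> real) \<Rightarrow> real \<Rightarrow> real
    \<Rightarrow> (('y \<Rightarrow> real) \<times> ('y \<Rightarrow> 'x \<Rightarrow> real) \<times> ('y \<Rightarrow> 'x \<Rightarrow> real)) set" where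
  "feasible W K \<epsilon> = {(T, V, V'). is_dist T \<and> is_cond V \<and> is_cond V' \<and>
     (Bterm T V' W \<le> Bterm T V W + ereal \<epsilon> \<and> Bterm T V W + ereal \<epsilon> \<le> ereal K
      \<or> ereal K \<le> Bterm T V W + ereal \<epsilon>)}"

lemma Ee_eq_INF_feasible:
  "Ee P W R K \<epsilon> = (INF (T, V, V') \<in> feasible W K \<epsilon>. Ffun P W R K T V V')"
proof -
  have "feasible W K \<epsilon> = {(T, V, V'). is_dist T \<and> is_cond V \<and> is_cond V'
        \<and> Bterm T V' W \<le> Bterm T V W + ereal \<epsilon> \<and> Bterm T V W + ereal \<epsilon> \<le> ereal K}
      \<union> {(T, V, V'). is_dist T \<and> is_cond V \<and> is_cond V' \<and> Bterm T V W + ereal \<epsilon> \<ge> ereal K}"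
    by (rule set_eqI) (auto simp: feasible_def)
  then show ?thesis
    by (simp only: Ee_def E1_def E2_def INF_union inf_min)
qed

lemma feasible_mono:
  assumes "\<epsilon> \<le> \<epsilon>'"
  shows "feasible W K \<epsilon> \<subseteq> feasible W K \<epsilon>'"
proof -
  have "b + ereal \<epsilon> \<le> b + ereal \<epsilon>'" for b
    using assms by (intro add_left_mono) simp
  then show ?thesis
    unfolding feasible_def by (auto intro: order_trans)
qed

lemma Ee_antimono: "\<epsilon> \<le> \<epsilon>' \<Longrightarrow> Ee P W R K \<epsilon>' \<le> Ee P W R K \<epsilon>"
  unfolding Ee_eq_INF_feasible by (intro INF_superset_mono feasible_mono) auto

lemma feasible_limit:
  assumes feasible: "\<And>n. (T n, V n, V' n) \<in> feasible W K (e n)" and e: "e \<longlonglongrightarrow> 0"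
    and dists: "is_dist T0" "is_cond V0" "is_cond V0'"
    and B: "(\<lambda>n. Bterm (T n) (V n) W) \<longlonglongrightarrow> Bterm T0 V0 W"
    and B': "(\<lambda>n. Bterm (T n) (V' n) W) \<longlonglongrightarrow> Bterm T0 V0' W"
  shows "(T0, V0, V0') \<in> feasible W K 0"
proof (cases "ereal K \<le> Bterm T0 V0 W")
  case False
  have Be: "(\<lambda>n. Bterm (T n) (V n) W + ereal (e n)) \<longlonglongrightarrow> Bterm T0 V0 W + ereal 0"
    using e by (intro tendsto_add_ereal_general B) auto
  with False have "eventually (\<lambda>n. Bterm (T n) (V n) W + ereal (e n) < ereal K) sequentially"
    by (intro order_tendstoD(2)) auto
  then have "eventually (\<lambda>n. Bterm (T n) (V' n) W \<le> Bterm (T n) (V n) W + ereal (e n)) sequentially"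
  proof eventually_elim
    case (elim n)
    then have "\<not> ereal K \<le> Bterm (T n) (V n) W + ereal (e n)"
      by simp
    with feasible[of n] show ?case
      by (simp add: feasible_def)
  qed
  then have "Bterm T0 V0' W \<le> Bterm T0 V0 W"
    using tendsto_le[OF trivial_limit_sequentially Be B'] by simp
  with False dists show ?thesis
    by (simp add: feasible_def)
qed (use dists in \<open>simp add: feasible_def\<close>)

lemma feasible_limit_point:
  assumes W: "is_cond W" and P: "is_dist P"
    and feasible: "\<And>n. (T n, V n, V' n) \<in> feasible W K (e n)" and e: "e \<longlonglongrightarrow> 0"
    and bounded: "\<And>n. Ffun P W R K (T n) (V n) (V' n) \<le> c" and "c \<noteq> \<infinity>"
  obtains T0 V0 V0' where "(T0, V0, V0') \<in> feasible W K 0" "Ffun P W R K T0 V0 V0' \<le> c"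
proof -
  have dists: "is_dist (T n)" "is_cond (V n)" "is_cond (V' n)" for n
    using feasible[of n] by (auto simp: feasible_def)
  have finite: "Ffun P W R K (T n) (V n) (V' n) \<noteq> \<infinity>" for n
    using bounded[of n] \<open>c \<noteq> \<infinity>\<close> by auto
  obtain r T0 V0 V0' where r: "strict_mono r" and dists0: "is_dist T0" "is_cond V0" "is_cond V0'"
    and T: "\<And>y. (\<lambda>n. T (r n) y) \<longlonglongrightarrow> T0 y" and V: "\<And>y x. (\<lambda>n. V (r n) y x) \<longlonglongrightarrow> V0 y x"
    and V': "\<And>y x. (\<lambda>n. V' (r n) y x) \<longlonglongrightarrow> V0' y x"
    using convergent_subsequence_dist_cond_cond[of T V V', OF dists] by blast
  have nonneg: "0 \<le> T n y" "0 \<le> V n y x" "0 \<le> V' n y x" "0 \<le> P x" "0 \<le> W x y" for n y x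
    using dists P W by (auto simp: is_cond_def is_dist_nonneg)
  note terms_finite = Ffun_finite[OF finite]
  note D = tendsto_Dterm[of "\<lambda>n. T (r n)" T0 "\<lambda>n. V (r n)" V0 P W, OF T V _ _ terms_finite(1)]
  note A = tendsto_Aterm[of "\<lambda>n. T (r n)" T0 "\<lambda>n. V' (r n)" V0' P, OF T V' _ _ terms_finite(2)]
  note B = tendsto_Bterm[of "\<lambda>n. T (r n)" T0 "\<lambda>n. V (r n)" V0 W, OF T V
      Dterm_finite_imp_Bterm_finite[OF terms_finite(1)]]
  note B' = tendsto_Bterm[of "\<lambda>n. T (r n)" T0 "\<lambda>n. V' (r n)" V0' W, OF T V' terms_finite(3)]
  have F: "(\<lambda>n. Ffun P W R K (T (r n)) (V (r n)) (V' (r n))) \<longlonglongrightarrow> Ffun P W R K T0 V0 V0'"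
    using D A B' nonneg by (intro tendsto_Ffun) auto
  show thesis
  proof
    show "(T0, V0, V0') \<in> feasible W K 0"
      using feasible dists0 B(2) B'(2) LIMSEQ_subseq_LIMSEQ[OF e r]
      by (intro feasible_limit[where e = "e \<circ> r"]) auto
    show "Ffun P W R K T0 V0 V0' \<le> c"
      using F bounded by (intro tendsto_upperbound) (auto intro: always_eventually)
  qed
qed

lemma Ee_lower_semicontinuous_zero:
  assumes W: "is_cond W" and P: "is_dist P"
    and e: "e \<longlonglongrightarrow> 0" and less: "\<And>n. Ee P W R K (e n) < c"
  shows "Ee P W R K 0 \<le> c"
proof (cases "c = \<infinity>")
  case False
  have "\<forall>n. \<exists>T V V'. (T, V, V') \<in> feasible W K (e n) \<and> Ffun P W R K T V V' < c"
    using less by (simp add: Ee_eq_INF_feasible INF_less_iff Bex_def split_paired_Ex)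
  then obtain T V V' where feasible: "\<And>n. (T n, V n, V' n) \<in> feasible W K (e n)"
    and bounded: "\<And>n. Ffun P W R K (T n) (V n) (V' n) \<le> c"
    by (metis less_imp_le)
  obtain T0 V0 V0' where feasible0: "(T0, V0, V0') \<in> feasible W K 0"
    and bounded0: "Ffun P W R K T0 V0 V0' \<le> c"
    using feasible_limit_point[OF W P feasible e bounded False] .
  have "Ee P W R K 0 \<le> Ffun P W R K T0 V0 V0'"
    unfolding Ee_eq_INF_feasible by (rule INF_lower2[OF feasible0]) simp
  also note bounded0
  finally show ?thesis .
qed simp

theorem lemma3:
  fixes P :: "'x::finite \<Rightarrow> real" and W :: "'x \<Rightarrow> 'y::finite \<Rightarrow> real"
    and R K :: real
  assumes "is_cond W" and "is_dist P" and "R > 0" and "K > 0"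
  shows "((\<lambda>\<epsilon>. Ee P W R K \<epsilon>) \<longlongrightarrow> Ee P W R K 0) (at_right 0)"
proof (rule tendsto_at_right_zero_antimono)
  show "Ee P W R K y \<le> Ee P W R K x" if "0 \<le> x" "x \<le> y" for x y
    using that(2) by (rule Ee_antimono)
  show "Ee P W R K 0 \<le> c" if "\<And>n. Ee P W R K (inverse (Suc n)) < c" for c
    using assms(1,2) LIMSEQ_inverse_real_of_nat that by (rule Ee_lower_semicontinuous_zero)
qed

end
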